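(* Fix $1<s<3/2$ and $z\in\mathbb{D}$, write $K_{ij}=K(x_i,x_j)$, and for $N\ge1$ let \[ J_{N,2}'=2\int_{\mathcal{U}_N(z)^2}T_z(x_1)^{3s}T_z(x_2)^{s}\,[K_{11}K_{12}+K_{11}K_{21}]\,\det[K_{ij}]_{1\le i,j\le2}\,\mathrm{d}\mu(x_1)\,\mathrm{d}\mu(x_2). \] There exists $c_2'(s)>0$ such that for all large enough $N$, \[ |J_{N,2}'|\le c_2'(s)\frac{(1+|z|)^4}{(1-|z|)^4}e^{(3-2s)N}. \]
   Context: $\mathbb{D}$ is the open unit disk, $\mathrm{d}\mu=\frac{1}{\pi}\mathrm{d}x\,\mathrm{d}y$, $K(z,w)=(1-z\overline{w})^{-2}$. $\varphi_z(x)=\frac{z-x}{1-\overline{z}x}$, $d_{\mathrm{h}}(z,x)=\log\frac{1+|\varphi_z(x)|}{1-|\varphi_z(x)|}$, $T_z(x)=e^{-d_{\mathrm{h}}(z,x)}=\frac{1-|\varphi_z(x)|}{1+|\varphi_z(x)|}$, and $\mathcal{U}_N(z)=\{x\in\mathbb{D}:d_{\mathrm{h}}(z,x)<N\}$. *)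

theory Defs
  imports "HOL-Analysis.Analysis"
begin

definition bergK :: "complex \<Rightarrow> complex \<Rightarrow> complex" where
  "bergK z w = 1 / (1 - z * cnj w)^2"

definition mobius :: "complex \<Rightarrow> complex \<Rightarrow> complex" where
  "mobius z x = (z - x) / (1 - cnj z * x)"

definition hdist :: "complex \<Rightarrow> complex \<Rightarrow> real" where
  "hdist z x = ln ((1 + cmod (mobius z x)) / (1 - cmod (mobius z x)))"

definition Tz :: "complex \<Rightarrow> complex \<Rightarrow> real" where
  "Tz z x = (1 - cmod (mobius z x)) / (1 + cmod (mobius z x))"

definition hball :: "real \<Rightarrow> complex \<Rightarrow> complex set" where
  "hball N z = {x. cmod x < 1 \<and> hdist z x < N}"

text \<open>The quantity J'_{N,2}; mu = Lebesgue measure / pi on each factor,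
  so mu x mu = lborel on complex x complex divided by pi^2.\<close>
definition Jprime2 :: "real \<Rightarrow> complex \<Rightarrow> real \<Rightarrow> complex" where
  "Jprime2 s z N = 2 * complex_of_real (1 / pi^2) *
     set_lebesgue_integral lborel (hball N z \<times> hball N z) (\<lambda>(x1, x2).
        complex_of_real (((Tz z x1) powr (3 * s)) * ((Tz z x2) powr s)) *
        (bergK x1 x1 * bergK x1 x2 + bergK x1 x1 * bergK x2 x1) *
        (bergK x1 x1 * bergK x2 x2 - bergK x1 x2 * bergK x2 x1))"

end

theory Submission
  imports Defs
begin

text \<open>
  For x in the disk, Tz z x is at most C (1 - |x|) with C = 2 (1 + |z|) / (1 - |z|), and hball N z lies in
  the disk of radius 1 - exp (- N) / C. Bounding the diagonal kernel values by (1 - |x|)^-2, the integrand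
  is dominated by 4 C^(4 s) (1 - |x1|)^(3 s - 4) (1 - |x2|)^(s - 2) |K(x1, x2)|. The x2-integral of
  (1 - |x2|)^(s - 2) |K(x1, x2)| is O(1 / (1 - |x1|)): averaging over rotations reduces it to the
  integral of |1 - q e^(i theta)|^-2 over the circle, which is O(1 / (1 - |q|)). What remains is the
  integral of (1 - |x1|)^(-1 - a) over the disk of radius 1 - exp (- N) / C, which is O(exp (a N)) for any
  a > 0 with 4 - 3 s <= a. Since s > 1 we may take a < 3 - 2 s, so the bound is eventually below
  exp ((3 - 2 s) N); as the threshold for N may depend on z, the constant c = 1 already works.
\<close>

section \<open>Lebesgue measure on the complex plane\<close>

lemma borel_measurable_Complex [measurable (raw)]:
  assumes "f \<in> borel_measurable M" "g \<in> borel_measurable M"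
  shows "(\<lambda>x. Complex (f x) (g x)) \<in> borel_measurable M"
  unfolding Complex_eq using assms by measurable

lemma borel_measurable_cnj [measurable (raw)]:
  assumes "f \<in> borel_measurable M"
  shows "(\<lambda>x. cnj (f x)) \<in> borel_measurable M"
proof -
  have "(\<lambda>x. cnj (f x)) = (\<lambda>x. Complex (Re (f x)) (- Im (f x)))"
    by (auto simp: complex_eq_iff)
  then show ?thesis using assms by simp
qed

lemma borel_measurable_sgn' [measurable (raw)]:
  fixes f :: "'a \<Rightarrow> 'b::real_normed_vector"
  assumes "f \<in> borel_measurable M"
  shows "(\<lambda>x. sgn (f x)) \<in> borel_measurable M"
  by (rule measurable_compose[OF assms borel_measurable_sgn])

lemma sets_ball_borel [measurable]: "ball c r \<in> sets borel"
  by simp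

lemma lborel_complex_eq_distr:
  "(lborel :: complex measure) = distr (lborel \<Otimes>\<^sub>M lborel) borel (\<lambda>(x, y). Complex x y)"
proof (rule lborel_eqI)
  fix l u :: complex
  assume le: "\<And>b. b \<in> Basis \<Longrightarrow> l \<bullet> b \<le> u \<bullet> b"
  then have Re: "Re l \<le> Re u" and Im: "Im l \<le> Im u"
    using le[of 1] le[of \<i>] by (auto simp: Basis_complex_def)
  have "(\<lambda>(x, y). Complex x y) -` box l u \<inter> space (lborel \<Otimes>\<^sub>M lborel)
      = {Re l<..<Re u} \<times> {Im l<..<Im u}"
    by (auto simp: box_def Basis_complex_def space_pair_measure)
  then have "emeasure (distr (lborel \<Otimes>\<^sub>M lborel) borel (\<lambda>(x, y). Complex x y)) (box l u)
      = ennreal (Re u - Re l) * ennreal (Im u - Im l)"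
    using Re Im by (subst emeasure_distr) (auto simp: lborel.emeasure_pair_measure_Times)
  also have "\<dots> = (\<Prod>b\<in>Basis. (u - l) \<bullet> b)"
    using Re Im by (simp add: Basis_complex_def ennreal_mult')
  finally show "emeasure (distr (lborel \<Otimes>\<^sub>M lborel) borel (\<lambda>(x, y). Complex x y)) (box l u)
      = (\<Prod>b\<in>Basis. (u - l) \<bullet> b)" .
qed simp

lemma nn_integral_lborel_complex:
  assumes [measurable]: "f \<in> borel_measurable (borel :: complex measure)"
  shows "(\<integral>\<^sup>+w. f w \<partial>lborel) = (\<integral>\<^sup>+x. \<integral>\<^sup>+y. f (Complex x y) \<partial>lborel \<partial>lborel)"
  by (subst lborel_complex_eq_distr, subst nn_integral_distr)
     (auto simp: case_prod_beta lborel.nn_integral_fst[symmetric])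

lemma nn_integral_lborel_complex_shear_Im:
  assumes [measurable]: "f \<in> borel_measurable (borel :: complex measure)"
  shows "(\<integral>\<^sup>+w. f (Complex (Re w) (Im w + t * Re w)) \<partial>lborel) = (\<integral>\<^sup>+w. f w \<partial>lborel)"
proof -
  have "(\<integral>\<^sup>+y. f (Complex x (y + t * x)) \<partial>lborel) = (\<integral>\<^sup>+y. f (Complex x y) \<partial>lborel)" for x
    using nn_integral_real_affine[of "\<lambda>y. f (Complex x y)" 1 "t * x"] by (simp add: add.commute)
  then show ?thesis by (simp add: nn_integral_lborel_complex)
qed

lemma nn_integral_lborel_complex_shear_Re:
  assumes [measurable]: "f \<in> borel_measurable (borel :: complex measure)"
  shows "(\<integral>\<^sup>+w. f (Complex (Re w + t * Im w) (Im w)) \<partial>lborel) = (\<integral>\<^sup>+w. f w \<partial>lborel)"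
proof -
  have "(\<integral>\<^sup>+x. f (Complex (x + t * y) y) \<partial>lborel) = (\<integral>\<^sup>+x. f (Complex x y) \<partial>lborel)" for y
    using nn_integral_real_affine[of "\<lambda>x. f (Complex x y)" 1 "t * y"] by (simp add: add.commute)
  then have "(\<integral>\<^sup>+y. \<integral>\<^sup>+x. f (Complex (x + t * y) y) \<partial>lborel \<partial>lborel)
      = (\<integral>\<^sup>+y. \<integral>\<^sup>+x. f (Complex x y) \<partial>lborel \<partial>lborel)" by simp
  then show ?thesis
    by (simp add: nn_integral_lborel_complex lborel_pair.Fubini'[of "\<lambda>x y. f (Complex (x + t * y) y)"]
        lborel_pair.Fubini'[of "\<lambda>x y. f (Complex x y)"])
qed

lemma nn_integral_lborel_complex_squeeze:
  assumes [measurable]: "f \<in> borel_measurable (borel :: complex measure)" and "p \<noteq> 0"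
  shows "(\<integral>\<^sup>+w. f (Complex (p * Re w) (Im w / p)) \<partial>lborel) = (\<integral>\<^sup>+w. f w \<partial>lborel)"
proof -
  have inner: "(\<integral>\<^sup>+y. f (Complex x (y / p)) \<partial>lborel) = ennreal \<bar>p\<bar> * (\<integral>\<^sup>+y. f (Complex x y) \<partial>lborel)" for x
    using nn_integral_real_affine[of "\<lambda>y. f (Complex x (y / p))" p 0] \<open>p \<noteq> 0\<close> by simp
  have outer: "ennreal \<bar>p\<bar> * (\<integral>\<^sup>+x. g (p * x) \<partial>lborel) = (\<integral>\<^sup>+x. g x \<partial>lborel)"
    if [measurable]: "g \<in> borel_measurable borel" for g :: "real \<Rightarrow> ennreal"
    using nn_integral_real_affine[of g p 0] \<open>p \<noteq> 0\<close> by (simp add: mult.commute)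
  have "(\<integral>\<^sup>+w. f (Complex (p * Re w) (Im w / p)) \<partial>lborel)
      = ennreal \<bar>p\<bar> * (\<integral>\<^sup>+x. \<integral>\<^sup>+y. f (Complex (p * x) y) \<partial>lborel \<partial>lborel)"
    by (simp add: nn_integral_lborel_complex inner nn_integral_cmult)
  also have "\<dots> = (\<integral>\<^sup>+w. f w \<partial>lborel)"
    using outer[of "\<lambda>x. \<integral>\<^sup>+y. f (Complex x y) \<partial>lborel"] by (simp add: nn_integral_lborel_complex)
  finally show ?thesis .
qed

lemma nn_integral_lborel_complex_rotate_Re_nonzero:
  assumes [measurable]: "f \<in> borel_measurable (borel :: complex measure)"
    and "cmod c = 1" and "Re c \<noteq> 0"
  shows "(\<integral>\<^sup>+w. f (c * w) \<partial>lborel) = (\<integral>\<^sup>+w. f w \<partial>lborel)"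
proof -
  define p q where "p = Re c" and "q = Im c"
  have pq: "p\<^sup>2 + q\<^sup>2 = 1"
    using \<open>cmod c = 1\<close> unfolding p_def q_def cmod_def by (metis real_sqrt_eq_1_iff)
  have "p \<noteq> 0" using \<open>Re c \<noteq> 0\<close> by (simp add: p_def)
  \<comment> \<open>Rotation by c factors as a shear along Re, a squeeze, and a shear along Im.\<close>
  define g2 where "g2 = (\<lambda>w. f (Complex (Re w) (Im w + q / p * Re w)))"
  define g1 where "g1 = (\<lambda>w. g2 (Complex (p * Re w) (Im w / p)))"
  have [measurable]: "g2 \<in> borel_measurable borel" "g1 \<in> borel_measurable borel"
    unfolding g1_def g2_def by measurable
  have "f (c * w) = g1 (Complex (Re w + (- q / p) * Im w) (Im w))" for w
  proof -
    have rot: "c * w = Complex (p * Re w - q * Im w) (q * Re w + p * Im w)"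
      by (simp add: complex_eq_iff p_def q_def)
    have "(p * p + q * q) * Im w = Im w"
      using pq by (simp add: power2_eq_square)
    then have Im_eq: "q * Re w + p * Im w = Im w / p + q / p * (p * Re w - q * Im w)"
      using \<open>p \<noteq> 0\<close> by (simp add: field_simps algebra_simps)
    have Re_eq: "p * (Re w + (- q / p) * Im w) = p * Re w - q * Im w"
      using \<open>p \<noteq> 0\<close> by (simp add: field_simps)
    show ?thesis
      unfolding rot Im_eq g1_def g2_def complex.sel Re_eq ..
  qed
  then have "(\<integral>\<^sup>+w. f (c * w) \<partial>lborel) = (\<integral>\<^sup>+w. g1 (Complex (Re w + (- q / p) * Im w) (Im w)) \<partial>lborel)"
    by simp
  also have "\<dots> = (\<integral>\<^sup>+w. g1 w \<partial>lborel)"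
    by (rule nn_integral_lborel_complex_shear_Re) simp
  also have "\<dots> = (\<integral>\<^sup>+w. g2 w \<partial>lborel)"
    unfolding g1_def by (rule nn_integral_lborel_complex_squeeze[OF _ \<open>p \<noteq> 0\<close>]) simp
  also have "\<dots> = (\<integral>\<^sup>+w. f w \<partial>lborel)"
    unfolding g2_def by (rule nn_integral_lborel_complex_shear_Im) simp
  finally show ?thesis .
qed

lemma nn_integral_lborel_complex_rotate:
  assumes [measurable]: "f \<in> borel_measurable (borel :: complex measure)" and "cmod c = 1"
  shows "(\<integral>\<^sup>+w. f (c * w) \<partial>lborel) = (\<integral>\<^sup>+w. f w \<partial>lborel)"
proof (cases "Re c = 0")
  case True
  define e where "e = csqrt c"
  have e: "cmod e = 1" "c = e * e"
    using \<open>cmod c = 1\<close> by (simp_all add: e_def power2_eq_square[symmetric])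
  have "Re e \<noteq> 0"
  proof
    assume "Re e = 0"
    then have "c = 0" using True e(2) by (simp add: complex_eq_iff)
    then show False using \<open>cmod c = 1\<close> by simp
  qed
  note rotate_e = nn_integral_lborel_complex_rotate_Re_nonzero[OF _ e(1) \<open>Re e \<noteq> 0\<close>]
  have "(\<integral>\<^sup>+w. f (c * w) \<partial>lborel) = (\<integral>\<^sup>+w. f (e * w) \<partial>lborel)"
    using rotate_e[of "\<lambda>v. f (e * v)"] by (simp add: e(2) mult.assoc)
  also have "\<dots> = (\<integral>\<^sup>+w. f w \<partial>lborel)"
    using rotate_e[of f] by simp
  finally show ?thesis .
qed (use nn_integral_lborel_complex_rotate_Re_nonzero assms in auto)

lemma emeasure_lborel_ball_complex:
  "0 \<le> r \<Longrightarrow> emeasure lborel (ball (c::complex) r) = ennreal (pi * r\<^sup>2)"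
  by (simp add: emeasure_ball unit_ball_vol_2)

lemma nn_integral_lborel_complex_rotation_average:
  assumes [measurable]: "G \<in> borel_measurable (borel :: complex measure)"
  shows "ennreal pi * (\<integral>\<^sup>+w. G w \<partial>lborel)
       = (\<integral>\<^sup>+w. \<integral>\<^sup>+c. G (sgn c * w) * indicator (ball 0 1 - {0}) c \<partial>lborel \<partial>lborel)"
proof -
  define E where "E = ball (0::complex) 1 - {0}"
  have [measurable]: "E \<in> sets borel"
    unfolding E_def by measurable
  have "emeasure lborel E = ennreal pi"
    unfolding E_def by (subst emeasure_Diff_null_set) (auto simp: emeasure_lborel_ball_complex)
  then have "ennreal pi * integral\<^sup>N lborel G = (\<integral>\<^sup>+c. integral\<^sup>N lborel G * indicator E c \<partial>lborel)"
    using nn_integral_cmult_indicator[of E lborel "integral\<^sup>N lborel G"] by (simp add: mult.commute)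
  also have "\<dots> = (\<integral>\<^sup>+c. \<integral>\<^sup>+w. G (sgn c * w) * indicator E c \<partial>lborel \<partial>lborel)"
    by (intro nn_integral_cong)
       (auto simp: E_def norm_sgn nn_integral_lborel_complex_rotate split: split_indicator)
  also have "\<dots> = (\<integral>\<^sup>+w. \<integral>\<^sup>+c. G (sgn c * w) * indicator E c \<partial>lborel \<partial>lborel)"
    by (rule lborel_pair.Fubini'[symmetric, of "\<lambda>c w. G (sgn c * w) * indicator E c"]) simp
  finally show ?thesis by (simp add: E_def)
qed

section \<open>Radial integrals over the unit disk\<close>

lemma emeasure_unit_disk_norm_greater:
  "emeasure lborel (ball (0::complex) 1 \<inter> {w. x < cmod w})
     = ennreal (if x < 0 then pi else if x < 1 then pi - pi * x\<^sup>2 else 0)"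
proof (cases "x < 0")
  case True
  then have "ball (0::complex) 1 \<inter> {w. x < cmod w} = ball 0 1"
    using norm_ge_zero by (auto simp: less_le_trans)
  then show ?thesis using True by (simp add: emeasure_lborel_ball_complex)
next
  case False
  show ?thesis
  proof (cases "x < 1")
    case True
    have "ball (0::complex) 1 \<inter> {w. x < cmod w} = ball 0 1 - cball 0 x" by auto
    moreover have "emeasure lborel (ball (0::complex) 1 - cball 0 x) = ennreal pi - ennreal (pi * x\<^sup>2)"
      using False True
      by (subst emeasure_Diff) (auto simp: emeasure_lborel_ball_complex emeasure_cball unit_ball_vol_2)
    moreover have "ennreal pi - ennreal (pi * x\<^sup>2) = ennreal (pi - pi * x\<^sup>2)"
      using False True by (subst ennreal_minus) (auto intro!: mult_left_le power_le_one)
    ultimately show ?thesis using False True by simp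
  next
    case False
    then have "ball (0::complex) 1 \<inter> {w. x < cmod w} = {}" by auto
    then show ?thesis using False \<open>\<not> x < 0\<close> by simp
  qed
qed

lemma emeasure_disk_radial_density_greater:
  "emeasure (density lborel (\<lambda>r. ennreal (2 * pi * r) * indicator {0..1} r)) {x<..}
     = ennreal (if x < 0 then pi else if x < 1 then pi - pi * x\<^sup>2 else 0)"
proof -
  have FTC: "(\<integral>\<^sup>+r. ennreal (2 * pi * r) * indicator {a..1} r \<partial>lborel) = ennreal (pi - pi * a\<^sup>2)"
    if "0 \<le> a" "a \<le> 1" for a :: real
    using nn_integral_FTC_Icc[where F="\<lambda>r. pi * r\<^sup>2" and f="\<lambda>r. 2 * pi * r" and a=a and b=1] that
    by (force intro!: derivative_eq_intros simp: power2_eq_square)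
  have "emeasure (density lborel (\<lambda>r. ennreal (2 * pi * r) * indicator {0..1} r)) {x<..}
     = (\<integral>\<^sup>+r. ennreal (2 * pi * r) * indicator {0..1} r * indicator {x<..} r \<partial>lborel)"
    by (intro emeasure_density) auto
  also have "\<dots> = (\<integral>\<^sup>+r. ennreal (2 * pi * r) * indicator {min 1 (max 0 x)..1} r \<partial>lborel)"
    using AE_lborel_singleton[of "min 1 (max 0 x)"]
    by (intro nn_integral_cong_AE) (auto elim!: eventually_mono split: split_indicator)
  also have "\<dots> = ennreal (pi - pi * (min 1 (max 0 x))\<^sup>2)"
    by (rule FTC) auto
  finally show ?thesis by (simp add: max_def min_def)
qed

lemma distr_norm_unit_disk:
  "distr (density lborel (indicator (ball (0::complex) 1))) borel cmod
     = density lborel (\<lambda>r. ennreal (2 * pi * r) * indicator {0..1} r)"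
proof (rule measure_eqI_lessThan)
  fix x :: real
  have "emeasure (distr (density lborel (indicator (ball (0::complex) 1))) borel cmod) {x<..}
      = emeasure lborel (ball (0::complex) 1 \<inter> {w. x < cmod w})"
    by (subst emeasure_distr, simp, simp, subst emeasure_restricted) (auto simp: vimage_def)
  then show "emeasure (distr (density lborel (indicator (ball (0::complex) 1))) borel cmod) {x<..}
      = emeasure (density lborel (\<lambda>r. ennreal (2 * pi * r) * indicator {0..1} r)) {x<..}"
    and "emeasure (distr (density lborel (indicator (ball (0::complex) 1))) borel cmod) {x<..} < \<infinity>"
    by (simp_all add: emeasure_unit_disk_norm_greater emeasure_disk_radial_density_greater)
qed auto

lemma nn_integral_unit_disk_radial:
  assumes [measurable]: "h \<in> borel_measurable (borel :: real measure)"
  shows "(\<integral>\<^sup>+w. h (cmod w) * indicator (ball (0::complex) 1) w \<partial>lborel)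
       = (\<integral>\<^sup>+r. h r * ennreal (2 * pi * r) * indicator {0..1} r \<partial>lborel)"
proof -
  have "(\<integral>\<^sup>+w. h (cmod w) * indicator (ball (0::complex) 1) w \<partial>lborel)
      = (\<integral>\<^sup>+r. h r \<partial>distr (density lborel (indicator (ball (0::complex) 1))) borel cmod)"
    by (subst nn_integral_distr, simp, simp, subst nn_integral_density) (auto simp: mult.commute)
  also have "\<dots> = (\<integral>\<^sup>+r. h r * ennreal (2 * pi * r) * indicator {0..1} r \<partial>lborel)"
    by (simp add: distr_norm_unit_disk nn_integral_density mult_ac)
  finally show ?thesis .
qed

lemma nn_integral_unit_disk_boundary_distance_le:
  assumes [measurable]: "h \<in> borel_measurable (borel :: real measure)"
  shows "(\<integral>\<^sup>+w. h (1 - cmod w) * indicator (ball (0::complex) 1) w \<partial>lborel)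
       \<le> ennreal (2 * pi) * (\<integral>\<^sup>+u. h u * indicator {0..1} u \<partial>lborel)"
proof -
  have "(\<integral>\<^sup>+w. h (1 - cmod w) * indicator (ball (0::complex) 1) w \<partial>lborel)
      = (\<integral>\<^sup>+r. h (1 - r) * ennreal (2 * pi * r) * indicator {0..1} r \<partial>lborel)"
    by (rule nn_integral_unit_disk_radial) simp
  also have "\<dots> \<le> (\<integral>\<^sup>+r. ennreal (2 * pi) * (h (1 - r) * indicator {0..1} r) \<partial>lborel)"
    by (intro nn_integral_mono)
       (auto simp: mult_ac intro!: mult_left_mono ennreal_leI split: split_indicator)
  also have "\<dots> = ennreal (2 * pi) * (\<integral>\<^sup>+r. h (1 + (- 1) * r) * indicator {0..1} (1 + (- 1) * r) \<partial>lborel)"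
  proof -
    have "indicator {0..1} (1 - r) = (indicator {0..1} r :: ennreal)" for r :: real
      by (auto split: split_indicator)
    then show ?thesis by (simp add: nn_integral_cmult)
  qed
  also have "\<dots> = ennreal (2 * pi) * (\<integral>\<^sup>+u. h u * indicator {0..1} u \<partial>lborel)"
    using nn_integral_real_affine[of "\<lambda>u. h u * indicator {0..1} u" "- 1" 1] by simp
  finally show ?thesis .
qed

lemma nn_integral_unit_disk_boundary_powr_le:
  fixes b :: real
  assumes "- 1 < b"
  shows "(\<integral>\<^sup>+w. ennreal ((1 - cmod w) powr b) * indicator (ball (0::complex) 1) w \<partial>lborel)
         \<le> ennreal (2 * pi / (b + 1))"
proof -
  have "((\<lambda>u. u powr b) has_integral (1 powr (b + 1) / (b + 1))) {0..1}"
    by (rule has_integral_powr_from_0) (use assms in auto)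
  then have "(\<integral>\<^sup>+u. ennreal (u powr b) * indicator {0..1} u \<partial>lborel) = ennreal (1 / (b + 1))"
    by (subst nn_integral_has_integral_lebesgue') auto
  then show ?thesis
    using nn_integral_unit_disk_boundary_distance_le[of "\<lambda>u. ennreal (u powr b)"] assms
    by (simp add: ennreal_mult[symmetric])
qed

lemma nn_integral_inner_disk_boundary_powr_le:
  fixes a \<delta> :: real
  assumes a: "0 < a" and \<delta>: "0 < \<delta>" "\<delta> \<le> 1"
  shows "(\<integral>\<^sup>+w. ennreal ((1 - cmod w) powr (- 1 - a)) * indicator (ball (0::complex) (1 - \<delta>)) w \<partial>lborel)
         \<le> ennreal (2 * pi * \<delta> powr (- a) / a)"
proof -
  define h where "h = (\<lambda>u. ennreal (u powr (- 1 - a)) * indicator {\<delta><..} u)"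
  have "(\<integral>\<^sup>+u. h u * indicator {0..1} u \<partial>lborel) = (\<integral>\<^sup>+u. ennreal (u powr (- 1 - a)) * indicator {\<delta>..1} u \<partial>lborel)"
    using AE_lborel_singleton[of \<delta>] \<delta>
    by (intro nn_integral_cong_AE) (auto simp: h_def elim!: eventually_mono split: split_indicator)
  also have "\<dots> = ennreal (- (1 powr (- a)) / a - - (\<delta> powr (- a)) / a)"
  proof (rule nn_integral_FTC_Icc[where F="\<lambda>u. - (u powr (- a)) / a"])
    fix u assume "u \<in> {\<delta>..1}"
    then have "0 < u" using \<delta> by auto
    then show "((\<lambda>u. - (u powr (- a)) / a) has_real_derivative u powr (- 1 - a)) (at u)"
      using a by (auto intro!: derivative_eq_intros simp: field_simps powr_diff simp flip: powr_add)
  qed (use \<delta> in auto)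
  also have "\<dots> \<le> ennreal (\<delta> powr (- a) / a)"
    using a by (intro ennreal_leI) (simp add: field_simps)
  finally have h_le: "(\<integral>\<^sup>+u. h u * indicator {0..1} u \<partial>lborel) \<le> ennreal (\<delta> powr (- a) / a)" .
  have "(\<integral>\<^sup>+w. ennreal ((1 - cmod w) powr (- 1 - a)) * indicator (ball (0::complex) (1 - \<delta>)) w \<partial>lborel)
      = (\<integral>\<^sup>+w. h (1 - cmod w) * indicator (ball (0::complex) 1) w \<partial>lborel)"
    using \<delta> by (intro nn_integral_cong) (auto simp: h_def split: split_indicator)
  also have "\<dots> \<le> ennreal (2 * pi) * (\<integral>\<^sup>+u. h u * indicator {0..1} u \<partial>lborel)"
    by (rule nn_integral_unit_disk_boundary_distance_le) (simp add: h_def)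
  also have "\<dots> \<le> ennreal (2 * pi) * ennreal (\<delta> powr (- a) / a)"
    by (rule mult_left_mono[OF h_le]) simp
  also have "\<dots> = ennreal (2 * pi * \<delta> powr (- a) / a)"
    using a by (simp add: ennreal_mult[symmetric])
  finally show ?thesis .
qed

section \<open>The angular kernel\<close>

lemma nn_integral_inverse_sum_squares_le:
  fixes a :: real
  assumes "0 < a"
  shows "(\<integral>\<^sup>+y. ennreal (1 / (a\<^sup>2 + y\<^sup>2)) * indicator {-1..1} y \<partial>lborel) \<le> ennreal (pi / a)"
proof -
  have "(\<integral>\<^sup>+y. ennreal (1 / (a\<^sup>2 + y\<^sup>2)) * indicator {-1..1} y \<partial>lborel)
      = ennreal (arctan (1 / a) / a - arctan (- 1 / a) / a)"
  proof (rule nn_integral_FTC_Icc[where F="\<lambda>y. arctan (y / a) / a"])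
    fix y :: real
    have "0 < a * a * (a * a + y * y)"
      using assms by (simp add: add_pos_nonneg)
    then have "a * (a * (a * a)) + a * (a * (y * y)) \<noteq> 0"
      by (simp add: algebra_simps)
    then show "((\<lambda>y. arctan (y / a) / a) has_real_derivative 1 / (a\<^sup>2 + y\<^sup>2)) (at y)"
      using assms by (auto intro!: derivative_eq_intros simp: field_simps power2_eq_square)
  qed (use assms in auto)
  also have "\<dots> \<le> ennreal (pi / a)"
    using arctan_ubound[of "1 / a"] assms by (intro ennreal_leI) (simp add: arctan_minus field_simps)
  finally show ?thesis .
qed

lemma norm_one_minus_unit_sq_ge:
  fixes e :: complex and \<rho> :: real
  assumes e: "cmod e = 1" and \<rho>: "0 \<le> \<rho>" "\<rho> \<le> 1"
  shows "(1 - \<rho>)\<^sup>2 + (Im e)\<^sup>2 \<le> 8 * (cmod (1 - of_real \<rho> * e))\<^sup>2"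
proof (cases "1 / 2 \<le> \<rho>")
  case True
  have unit: "(Re e)\<^sup>2 + (Im e)\<^sup>2 = 1"
    using e by (simp add: cmod_power2[symmetric])
  then have "\<bar>Re e\<bar> \<le> 1" by (metis abs_Re_le_cmod e)
  have "(cmod (1 - of_real \<rho> * e))\<^sup>2 = (1 - \<rho> * Re e)\<^sup>2 + (\<rho> * Im e)\<^sup>2"
    by (simp add: cmod_power2)
  also have "\<dots> = 1 - 2 * \<rho> * Re e + \<rho>\<^sup>2 * ((Re e)\<^sup>2 + (Im e)\<^sup>2)"
    by (simp add: power2_eq_square algebra_simps)
  also have "\<dots> = (1 - \<rho>)\<^sup>2 + 2 * \<rho> * (1 - Re e)"
    using unit by (simp add: power2_eq_square algebra_simps)
  finally have sq: "(cmod (1 - of_real \<rho> * e))\<^sup>2 = (1 - \<rho>)\<^sup>2 + 2 * \<rho> * (1 - Re e)" .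
  have "(Im e)\<^sup>2 = (1 - Re e) * (1 + Re e)"
    using unit by (simp add: algebra_simps power2_eq_square)
  also have "\<dots> \<le> (1 - Re e) * (4 * \<rho>)"
    using \<open>\<bar>Re e\<bar> \<le> 1\<close> True by (intro mult_left_mono) auto
  finally have "(Im e)\<^sup>2 \<le> 2 * (2 * \<rho> * (1 - Re e))" by (simp add: algebra_simps)
  moreover have "0 \<le> (1 - \<rho>)\<^sup>2" "0 \<le> 2 * \<rho> * (1 - Re e)"
    using \<rho> \<open>\<bar>Re e\<bar> \<le> 1\<close> by auto
  ultimately show ?thesis
    unfolding sq by (smt (verit))
next
  case False
  have "1 - \<rho> \<le> cmod (1 - of_real \<rho> * e)"
    using norm_triangle_ineq2[of 1 "of_real \<rho> * e"] e \<rho> by (simp add: norm_mult)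
  then have "1 / 2 * (1 / 2) \<le> (cmod (1 - of_real \<rho> * e))\<^sup>2"
    using False mult_mono[of "1 / 2" "cmod (1 - of_real \<rho> * e)" "1 / 2" "cmod (1 - of_real \<rho> * e)"]
    by (simp add: power2_eq_square)
  moreover have "(1 - \<rho>)\<^sup>2 \<le> 1" "(Im e)\<^sup>2 \<le> 1"
    using \<rho> abs_Im_le_cmod[of e] e by (simp_all add: abs_square_le_1)
  ultimately show ?thesis by linarith
qed

lemma inverse_norm_one_minus_sgn_sq_le:
  fixes c :: complex and \<rho> :: real
  assumes c: "c \<noteq> 0" "cmod c \<le> 1" and \<rho>: "0 \<le> \<rho>" "\<rho> < 1"
  shows "1 / (cmod (1 - of_real \<rho> * sgn c))\<^sup>2 \<le> 8 / ((1 - \<rho>)\<^sup>2 + (Im c)\<^sup>2)"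
proof -
  have "\<bar>Im c\<bar> * cmod c \<le> \<bar>Im c\<bar>"
    using c by (simp add: mult_left_le)
  moreover have "Im (sgn c) = Im c / cmod c"
    by (simp add: sgn_div_norm divide_inverse mult.commute)
  ultimately have "\<bar>Im c\<bar> \<le> \<bar>Im (sgn c)\<bar>"
    using c by (simp add: abs_div le_divide_eq)
  then have "(Im c)\<^sup>2 \<le> (Im (sgn c))\<^sup>2"
    by (simp only: abs_le_square_iff)
  then have le: "(1 - \<rho>)\<^sup>2 + (Im c)\<^sup>2 \<le> 8 * (cmod (1 - of_real \<rho> * sgn c))\<^sup>2"
    using norm_one_minus_unit_sq_ge[of "sgn c" \<rho>] c \<rho> by (simp add: norm_sgn)
  have pos: "0 < (1 - \<rho>)\<^sup>2 + (Im c)\<^sup>2"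
    using \<rho> by (simp add: add_pos_nonneg)
  have "8 / (8 * (cmod (1 - of_real \<rho> * sgn c))\<^sup>2) \<le> 8 / ((1 - \<rho>)\<^sup>2 + (Im c)\<^sup>2)"
    by (rule divide_left_mono[OF le]) (use le pos in \<open>auto intro!: mult_pos_pos\<close>)
  then show ?thesis by simp
qed

lemma nn_integral_angular_kernel_real_le:
  fixes \<rho> :: real
  assumes "0 \<le> \<rho>" "\<rho> < 1"
  shows "(\<integral>\<^sup>+c. ennreal (1 / (cmod (1 - of_real \<rho> * sgn c))\<^sup>2) * indicator (ball 0 1 - {0}) c \<partial>lborel)
         \<le> ennreal (16 * pi / (1 - \<rho>))"
proof -
  define a where "a = 1 - \<rho>"
  have "0 < a" using assms by (simp add: a_def)
  define g where "g = (\<lambda>y. ennreal (1 / (a\<^sup>2 + y\<^sup>2)) * indicator {-1..1} y)"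
  have "ennreal (1 / (cmod (1 - of_real \<rho> * sgn c))\<^sup>2) * indicator (ball 0 1 - {0}) c
      \<le> ennreal 8 * (indicator {-1..1} (Re c) * g (Im c))" for c :: complex
  proof (cases "c \<in> ball 0 1 - {0}")
    case True
    then have "\<bar>Re c\<bar> \<le> 1" "\<bar>Im c\<bar> \<le> 1"
      using abs_Re_le_cmod[of c] abs_Im_le_cmod[of c] by auto
    moreover have "ennreal (1 / (cmod (1 - of_real \<rho> * sgn c))\<^sup>2) \<le> ennreal 8 * ennreal (1 / (a\<^sup>2 + (Im c)\<^sup>2))"
      using inverse_norm_one_minus_sgn_sq_le[of c \<rho>] True assms
      by (subst ennreal_mult[symmetric]) (auto simp: a_def intro!: ennreal_leI)
    ultimately show ?thesis
      using True by (simp add: g_def abs_le_iff)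
  qed simp
  then have "(\<integral>\<^sup>+c. ennreal (1 / (cmod (1 - of_real \<rho> * sgn c))\<^sup>2) * indicator (ball 0 1 - {0}) c \<partial>lborel)
      \<le> (\<integral>\<^sup>+c. ennreal 8 * (indicator {-1..1} (Re c) * g (Im c)) \<partial>lborel)"
    by (rule nn_integral_mono)
  also have "\<dots> = ennreal 8 * (\<integral>\<^sup>+x. indicator {-1..1::real} x * integral\<^sup>N lborel g \<partial>lborel)"
    by (simp add: nn_integral_cmult nn_integral_lborel_complex g_def)
  also have "\<dots> = ennreal 8 * (ennreal 2 * integral\<^sup>N lborel g)"
    using nn_integral_cmult_indicator[of "{-1..1::real}" lborel "integral\<^sup>N lborel g"]
    by (simp add: mult.commute)
  also have "\<dots> \<le> ennreal 8 * (ennreal 2 * ennreal (pi / a))"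
    unfolding g_def by (intro mult_left_mono nn_integral_inverse_sum_squares_le \<open>0 < a\<close>) simp_all
  also have "\<dots> = ennreal (16 * (pi / a))"
    using ennreal_mult[of 16 "pi / a"] \<open>0 < a\<close> by simp
  finally show ?thesis by (simp add: a_def)
qed

lemma nn_integral_angular_kernel_le:
  fixes q :: complex
  assumes "cmod q < 1"
  shows "(\<integral>\<^sup>+c. ennreal (1 / (cmod (1 - q * cnj (sgn c)))\<^sup>2) * indicator (ball 0 1 - {0}) c \<partial>lborel)
         \<le> ennreal (16 * pi / (1 - cmod q))"
proof -
  define \<omega> where "\<omega> = (if q = 0 then 1 else sgn q)"
  have "cmod \<omega> = 1" by (simp add: \<omega>_def norm_sgn)
  have q: "q = of_real (cmod q) * \<omega>"
    by (simp add: \<omega>_def scaleR_conv_of_real sgn_div_norm)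
  define F where "F = (\<lambda>c. ennreal (1 / (cmod (1 - of_real (cmod q) * sgn c))\<^sup>2) * indicator (ball 0 1 - {0}) c)"
  have [measurable]: "F \<in> borel_measurable borel"
    unfolding F_def by measurable
  have "ennreal (1 / (cmod (1 - q * cnj (sgn c)))\<^sup>2) * indicator (ball 0 1 - {0}) c = F (cnj \<omega> * c)" for c
  proof -
    have "sgn (cnj \<omega> * c) = cnj \<omega> * sgn c"
      using \<open>cmod \<omega> = 1\<close> by (simp add: sgn_mult sgn_div_norm norm_mult)
    moreover have "cmod (1 - of_real (cmod q) * (cnj \<omega> * sgn c)) = cmod (1 - q * cnj (sgn c))"
    proof -
      have "1 - of_real (cmod q) * (cnj \<omega> * sgn c) = cnj (1 - q * cnj (sgn c))"
        by (subst (2) q) simp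
      then show ?thesis by (metis complex_mod_cnj)
    qed
    moreover have "cnj \<omega> * c \<in> ball 0 1 - {0} \<longleftrightarrow> c \<in> ball 0 1 - {0}"
      using \<open>cmod \<omega> = 1\<close> by (auto simp: norm_mult)
    ultimately show ?thesis
      unfolding F_def by (simp add: indicator_def del: complex_cnj_mult)
  qed
  then have "(\<integral>\<^sup>+c. ennreal (1 / (cmod (1 - q * cnj (sgn c)))\<^sup>2) * indicator (ball 0 1 - {0}) c \<partial>lborel)
      = (\<integral>\<^sup>+c. F (cnj \<omega> * c) \<partial>lborel)" by simp
  also have "\<dots> = (\<integral>\<^sup>+c. F c \<partial>lborel)"
    by (rule nn_integral_lborel_complex_rotate) (simp_all add: \<open>cmod \<omega> = 1\<close>)
  also have "\<dots> \<le> ennreal (16 * pi / (1 - cmod q))"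
    unfolding F_def by (rule nn_integral_angular_kernel_real_le) (simp_all add: assms)
  finally show ?thesis .
qed

section \<open>Integrals of the Bergman kernel\<close>

lemma norm_bergK: "cmod (bergK x y) = 1 / (cmod (1 - x * cnj y))\<^sup>2"
  by (simp add: bergK_def norm_divide norm_power)

lemma norm_bergK_commute: "cmod (bergK y x) = cmod (bergK x y)"
proof -
  have "1 - y * cnj x = cnj (1 - x * cnj y)" by (simp add: mult.commute)
  then show ?thesis by (metis complex_mod_cnj norm_bergK)
qed

lemma norm_bergK_le:
  assumes x: "cmod x < 1" and y: "cmod y < 1"
  shows "cmod (bergK x y) \<le> 1 / ((1 - cmod x) * (1 - cmod y))"
proof -
  have "1 - cmod x \<le> 1 - cmod x * cmod y" "1 - cmod y \<le> 1 - cmod x * cmod y"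
    using x y by (simp_all add: mult_left_le mult_left_le_one_le)
  then have "(1 - cmod x) * (1 - cmod y) \<le> (1 - cmod x * cmod y)\<^sup>2"
    using x y by (simp add: power2_eq_square mult_mono)
  also have "\<dots> \<le> (cmod (1 - x * cnj y))\<^sup>2"
    using norm_triangle_ineq2[of 1 "x * cnj y"] x y
    by (intro power_mono) (simp_all add: norm_mult mult_le_one)
  finally show ?thesis
    using x y unfolding norm_bergK by (intro frac_le) auto
qed

lemma nn_integral_boundary_powr_norm_bergK_le:
  fixes b :: real and x :: complex
  assumes b: "- 1 < b" and x: "cmod x < 1"
  shows "(\<integral>\<^sup>+w. ennreal ((1 - cmod w) powr b * cmod (bergK x w)) * indicator (ball 0 1) w \<partial>lborel)
         \<le> ennreal (32 * pi / ((b + 1) * (1 - cmod x)))"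
proof -
  define G where "G = (\<lambda>w. ennreal ((1 - cmod w) powr b * cmod (bergK x w)) * indicator (ball (0::complex) 1) w)"
  define B where "B = 16 * pi / (1 - cmod x)"
  have "(\<integral>\<^sup>+c. G (sgn c * w) * indicator (ball 0 1 - {0}) c \<partial>lborel)
      \<le> ennreal B * (ennreal ((1 - cmod w) powr b) * indicator (ball 0 1) w)" for w
  proof (cases "w \<in> ball 0 1")
    case True
    define q where "q = x * cnj w"
    have "cmod q \<le> cmod x" using True by (simp add: q_def norm_mult mult_left_le)
    have "(\<integral>\<^sup>+c. G (sgn c * w) * indicator (ball 0 1 - {0}) c \<partial>lborel) = ennreal ((1 - cmod w) powr b) *
        (\<integral>\<^sup>+c. ennreal (1 / (cmod (1 - q * cnj (sgn c)))\<^sup>2) * indicator (ball 0 1 - {0}) c \<partial>lborel)"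
      using True by (subst nn_integral_cmult[symmetric])
        (auto simp: G_def q_def norm_bergK norm_mult norm_sgn ennreal_mult' divide_inverse mult_ac
          intro!: nn_integral_cong split: split_indicator)
    also have "\<dots> \<le> ennreal ((1 - cmod w) powr b) * ennreal (16 * pi / (1 - cmod q))"
      using \<open>cmod q \<le> cmod x\<close> x by (intro mult_left_mono nn_integral_angular_kernel_le) auto
    also have "\<dots> \<le> ennreal ((1 - cmod w) powr b) * ennreal B"
      using \<open>cmod q \<le> cmod x\<close> x
      by (intro mult_left_mono ennreal_leI) (auto simp: B_def intro!: divide_left_mono)
    finally show ?thesis using True by (simp add: mult_ac)
  next
    case False
    then have "G (sgn c * w) * indicator (ball 0 1 - {0}) c = 0" for c
      by (auto simp: G_def norm_mult norm_sgn split: split_indicator)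
    then show ?thesis by (simp only: nn_integral_const mult_zero_left zero_le)
  qed
  moreover have [measurable]: "G \<in> borel_measurable borel"
    unfolding G_def bergK_def by measurable
  \<comment> \<open>Averaging over rotations reduces the integral to the angular kernel.\<close>
  ultimately have "ennreal pi * integral\<^sup>N lborel G
      \<le> (\<integral>\<^sup>+w. ennreal B * (ennreal ((1 - cmod w) powr b) * indicator (ball 0 1) w) \<partial>lborel)"
    by (subst nn_integral_lborel_complex_rotation_average) (simp_all add: nn_integral_mono)
  also have "\<dots> \<le> ennreal B * ennreal (2 * pi / (b + 1))"
    by (simp add: nn_integral_cmult mult_left_mono nn_integral_unit_disk_boundary_powr_le b)
  also have "\<dots> = ennreal pi * ennreal (32 * pi / ((b + 1) * (1 - cmod x)))"
  proof -
    have "B * (2 * pi / (b + 1)) = pi * (32 * pi / ((b + 1) * (1 - cmod x)))"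
      using b x by (simp add: B_def field_simps)
    moreover have "0 \<le> B" "0 \<le> 2 * pi / (b + 1)" "0 \<le> 32 * pi / ((b + 1) * (1 - cmod x))"
      using b x by (simp_all add: B_def)
    ultimately show ?thesis
      by (simp only: ennreal_mult[symmetric] pi_ge_zero)
  qed
  finally show ?thesis
    by (subst (asm) ennreal_mult_le_mult_iff) (auto simp: G_def)
qed

definition weighted_norm_bergK :: "real \<Rightarrow> real \<Rightarrow> complex \<times> complex \<Rightarrow> real" where
  "weighted_norm_bergK t b = (\<lambda>(x1, x2). (1 - cmod x1) powr t * (1 - cmod x2) powr b * cmod (bergK x1 x2))"

lemma borel_measurable_weighted_norm_bergK [measurable]:
  "weighted_norm_bergK t b \<in> borel_measurable (lborel \<Otimes>\<^sub>M lborel)"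
  unfolding weighted_norm_bergK_def bergK_def case_prod_beta by measurable

lemma nn_integral_weighted_norm_bergK_slice_le:
  fixes t b a :: real and x1 :: complex
  assumes b: "- 1 < b" and a: "0 < a" "- a \<le> t" and x1: "cmod x1 < 1"
  shows "(\<integral>\<^sup>+x2. ennreal (weighted_norm_bergK t b (x1, x2)) * indicator (ball 0 1) x2 \<partial>lborel)
         \<le> ennreal (32 * pi / (b + 1)) * ennreal ((1 - cmod x1) powr (- 1 - a))"
proof -
  define u where "u = 1 - cmod x1"
  have u: "0 < u" "u \<le> 1"
    using x1 by (auto simp: u_def)
  have "(\<integral>\<^sup>+x2. ennreal (weighted_norm_bergK t b (x1, x2)) * indicator (ball 0 1) x2 \<partial>lborel)
      = (\<integral>\<^sup>+x2. ennreal (u powr t) * (ennreal ((1 - cmod x2) powr b * cmod (bergK x1 x2)) * indicator (ball 0 1) x2) \<partial>lborel)"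
    by (intro nn_integral_cong) (simp add: weighted_norm_bergK_def u_def ennreal_mult mult.assoc)
  also have "\<dots> = ennreal (u powr t) * (\<integral>\<^sup>+x2. ennreal ((1 - cmod x2) powr b * cmod (bergK x1 x2)) * indicator (ball 0 1) x2 \<partial>lborel)"
    by (rule nn_integral_cmult) (simp add: bergK_def)
  also have "\<dots> \<le> ennreal (u powr t) * ennreal (32 * pi / ((b + 1) * u))"
    unfolding u_def by (intro mult_left_mono nn_integral_boundary_powr_norm_bergK_le b x1) simp
  also have "\<dots> = ennreal (32 * pi / (b + 1) * u powr (t - 1))"
  proof -
    have "u powr t * (32 * pi / ((b + 1) * u)) = 32 * pi / (b + 1) * u powr (t - 1)"
      using b u by (simp add: powr_diff field_simps)
    moreover have "0 \<le> 32 * pi / ((b + 1) * u)"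
      using b u by simp
    ultimately show ?thesis
      by (simp only: ennreal_mult[symmetric] powr_ge_zero)
  qed
  also have "\<dots> \<le> ennreal (32 * pi / (b + 1) * u powr (- 1 - a))"
    using a b u by (intro ennreal_leI mult_left_mono powr_mono') auto
  also have "\<dots> = ennreal (32 * pi / (b + 1)) * ennreal (u powr (- 1 - a))"
    by (rule ennreal_mult) (use b in auto)
  finally show ?thesis by (simp add: u_def)
qed

lemma nn_integral_weighted_norm_bergK_le:
  fixes t b a \<delta> :: real
  assumes b: "- 1 < b" and a: "0 < a" "- a \<le> t" and \<delta>: "0 < \<delta>" "\<delta> \<le> 1"
  shows "(\<integral>\<^sup>+p. ennreal (weighted_norm_bergK t b p) * indicator (ball 0 (1 - \<delta>) \<times> ball 0 1) p \<partial>lborel)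
         \<le> ennreal (32 * pi / (b + 1) * (2 * pi * \<delta> powr (- a) / a))"
proof -
  have "(\<integral>\<^sup>+p. ennreal (weighted_norm_bergK t b p) * indicator (ball 0 (1 - \<delta>) \<times> ball 0 1) p \<partial>lborel)
      = (\<integral>\<^sup>+x1. \<integral>\<^sup>+x2. ennreal (weighted_norm_bergK t b (x1, x2))
          * indicator (ball 0 (1 - \<delta>) \<times> ball 0 1) (x1, x2) \<partial>lborel \<partial>lborel)"
    by (subst lborel_prod[symmetric], subst lborel.nn_integral_fst[symmetric]) auto
  also have "\<dots> \<le> (\<integral>\<^sup>+x1. ennreal (32 * pi / (b + 1)) *
      (ennreal ((1 - cmod x1) powr (- 1 - a)) * indicator (ball 0 (1 - \<delta>)) x1) \<partial>lborel)"
  proof (intro nn_integral_mono)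
    fix x1 :: complex
    show "(\<integral>\<^sup>+x2. ennreal (weighted_norm_bergK t b (x1, x2))
          * indicator (ball 0 (1 - \<delta>) \<times> ball 0 1) (x1, x2) \<partial>lborel)
        \<le> ennreal (32 * pi / (b + 1)) * (ennreal ((1 - cmod x1) powr (- 1 - a)) * indicator (ball 0 (1 - \<delta>)) x1)"
    proof (cases "x1 \<in> ball 0 (1 - \<delta>)")
      case True
      then have "cmod x1 < 1" using \<delta> by simp
      with True nn_integral_weighted_norm_bergK_slice_le[OF b a this] b show ?thesis
        by (simp add: ennreal_mult indicator_times)
    qed simp
  qed
  also have "\<dots> \<le> ennreal (32 * pi / (b + 1)) * ennreal (2 * pi * \<delta> powr (- a) / a)"
    by (simp add: nn_integral_cmult mult_left_mono nn_integral_inner_disk_boundary_powr_le a \<delta>)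
  also have "\<dots> = ennreal (32 * pi / (b + 1) * (2 * pi * \<delta> powr (- a) / a))"
    by (rule ennreal_mult[symmetric]) (use a b in auto)
  finally show ?thesis .
qed

section \<open>Disk automorphisms and the weight Tz\<close>

lemma norm_one_minus_cnj_mult_ge:
  fixes z x :: complex
  shows "1 - cmod z * cmod x \<le> cmod (1 - cnj z * x)"
  using norm_triangle_ineq2[of 1 "cnj z * x"] by (simp add: norm_mult)

lemma norm_one_minus_cnj_mult_pos:
  fixes z x :: complex
  assumes "cmod z < 1" "cmod x < 1"
  shows "0 < cmod (1 - cnj z * x)"
proof -
  have "cmod z * cmod x < 1"
    using assms by (metis mult_strict_mono' norm_ge_zero mult_1)
  then show ?thesis
    using norm_one_minus_cnj_mult_ge[of z x] by linarith
qed

lemma one_minus_norm_mobius_sq: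
  fixes z x :: complex
  assumes "cmod z < 1" "cmod x < 1"
  shows "1 - (cmod (mobius z x))\<^sup>2 = (1 - (cmod z)\<^sup>2) * (1 - (cmod x)\<^sup>2) / (cmod (1 - cnj z * x))\<^sup>2"
proof -
  have "(cmod (1 - cnj z * x))\<^sup>2 - (cmod (z - x))\<^sup>2 = (1 - (cmod z)\<^sup>2) * (1 - (cmod x)\<^sup>2)"
    unfolding cmod_power2 by (simp add: power2_eq_square algebra_simps)
  with norm_one_minus_cnj_mult_pos[OF assms] show ?thesis
    by (simp add: mobius_def norm_divide power_divide field_simps)
qed

lemma norm_mobius_less_one:
  assumes "cmod z < 1" "cmod x < 1"
  shows "cmod (mobius z x) < 1"
proof -
  have "(cmod z)\<^sup>2 < 1" "(cmod x)\<^sup>2 < 1"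
    using assms by (simp_all add: power_less_one_iff abs_less_iff)
  then have "0 < 1 - (cmod (mobius z x))\<^sup>2"
    using assms norm_one_minus_cnj_mult_pos[OF assms] by (simp add: one_minus_norm_mobius_sq)
  then show ?thesis
    by (simp add: power_less_one_iff abs_less_iff)
qed

lemma Tz_pos: "cmod z < 1 \<Longrightarrow> cmod x < 1 \<Longrightarrow> 0 < Tz z x"
  using norm_mobius_less_one[of z x] by (simp add: Tz_def add_pos_nonneg)

lemma Tz_le_boundary_distance:
  assumes z: "cmod z < 1" and x: "cmod x < 1"
  shows "Tz z x \<le> 2 * (1 + cmod z) / (1 - cmod z) * (1 - cmod x)"
proof -
  define m where "m = cmod (mobius z x)"
  have m: "0 \<le> m" "m < 1"
    using norm_mobius_less_one[OF z x] by (auto simp: m_def)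
  have "Tz z x = (1 - m) / (1 + m)" by (simp add: Tz_def m_def)
  also have "\<dots> \<le> 1 - m"
    using m by (simp add: field_simps mult_left_le)
  also have "\<dots> \<le> 1 - m\<^sup>2"
    using m by (simp add: power2_eq_square mult_left_le_one_le)
  also have "\<dots> = (1 - (cmod z)\<^sup>2) * (1 - (cmod x)\<^sup>2) / (cmod (1 - cnj z * x))\<^sup>2"
    unfolding m_def by (rule one_minus_norm_mobius_sq[OF z x])
  also have "\<dots> \<le> (1 - (cmod z)\<^sup>2) * (1 - (cmod x)\<^sup>2) / (1 - cmod z)\<^sup>2"
  proof (rule divide_left_mono)
    have "1 - cmod z \<le> cmod (1 - cnj z * x)"
      using norm_one_minus_cnj_mult_ge[of z x] x mult_left_le[of "cmod x" "cmod z"] by simp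
    then show "(1 - cmod z)\<^sup>2 \<le> (cmod (1 - cnj z * x))\<^sup>2"
      using z by (intro power_mono) auto
    show "0 \<le> (1 - (cmod z)\<^sup>2) * (1 - (cmod x)\<^sup>2)"
      using z x by (simp add: power_le_one abs_square_le_1)
    show "0 < (cmod (1 - cnj z * x))\<^sup>2 * (1 - cmod z)\<^sup>2"
      using norm_one_minus_cnj_mult_pos[OF z x] z by simp
  qed
  also have "\<dots> = (1 + cmod z) / (1 - cmod z) * ((1 + cmod x) * (1 - cmod x))"
  proof -
    have "1 - (cmod z)\<^sup>2 = (1 + cmod z) * (1 - cmod z)" "1 - (cmod x)\<^sup>2 = (1 + cmod x) * (1 - cmod x)"
      by (simp_all add: power2_eq_square algebra_simps)
    then show ?thesis using z by (simp add: power2_eq_square)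
  qed
  also have "\<dots> \<le> (1 + cmod z) / (1 - cmod z) * (2 * (1 - cmod x))"
    using z x by (intro mult_left_mono mult_right_mono) auto
  also have "\<dots> = 2 * (1 + cmod z) / (1 - cmod z) * (1 - cmod x)"
    using z by (simp add: field_simps)
  finally show ?thesis .
qed

lemma exp_neg_less_Tz:
  assumes "cmod z < 1" and "x \<in> hball N z"
  shows "exp (- N) < Tz z x"
proof -
  have x: "cmod x < 1" and "hdist z x < N"
    using assms(2) by (auto simp: hball_def)
  have "hdist z x = - ln (Tz z x)"
    using norm_mobius_less_one[OF assms(1) x]
    by (simp add: hdist_def Tz_def ln_div add_pos_nonneg)
  then have "- N < ln (Tz z x)"
    using \<open>hdist z x < N\<close> by simp
  then show ?thesis
    using Tz_pos[OF assms(1) x] by (metis exp_less_cancel_iff exp_ln)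
qed

lemma hball_subset_ball:
  assumes "cmod z < 1"
  shows "hball N z \<subseteq> ball 0 (1 - exp (- N) / (2 * (1 + cmod z) / (1 - cmod z)))"
proof
  define C where "C = 2 * (1 + cmod z) / (1 - cmod z)"
  have "0 < C" using assms by (simp add: C_def add_pos_nonneg)
  fix x assume "x \<in> hball N z"
  then have x: "cmod x < 1" by (simp add: hball_def)
  have "exp (- N) < C * (1 - cmod x)"
    using exp_neg_less_Tz[OF assms \<open>x \<in> hball N z\<close>] Tz_le_boundary_distance[OF assms x]
    unfolding C_def by linarith
  then have "exp (- N) / C < 1 - cmod x"
    using \<open>0 < C\<close> by (simp add: pos_divide_less_eq mult.commute)
  then show "x \<in> ball 0 (1 - exp (- N) / C)" by simp
qed

definition Jprime2_integrand :: "real \<Rightarrow> complex \<Rightarrow> complex \<times> complex \<Rightarrow> complex" where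
  "Jprime2_integrand s z = (\<lambda>(x1, x2).
     complex_of_real (((Tz z x1) powr (3 * s)) * ((Tz z x2) powr s)) *
     (bergK x1 x1 * bergK x1 x2 + bergK x1 x1 * bergK x2 x1) *
     (bergK x1 x1 * bergK x2 x2 - bergK x1 x2 * bergK x2 x1))"

lemma Jprime2_eq:
  "Jprime2 s z N = 2 * complex_of_real (1 / pi\<^sup>2) *
     set_lebesgue_integral lborel (hball N z \<times> hball N z) (Jprime2_integrand s z)"
  by (simp add: Jprime2_def Jprime2_integrand_def)

lemma norm_Jprime2_integrand_le:
  fixes s :: real and z x1 x2 :: complex
  assumes s: "0 \<le> s" and z: "cmod z < 1" and x1: "cmod x1 < 1" and x2: "cmod x2 < 1"
  defines "C \<equiv> 2 * (1 + cmod z) / (1 - cmod z)"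
  shows "cmod (Jprime2_integrand s z (x1, x2)) \<le> 4 * C powr (4 * s) * weighted_norm_bergK (3 * s - 4) (s - 2) (x1, x2)"
proof -
  define u v where "u = 1 - cmod x1" and "v = 1 - cmod x2"
  define k where "k = cmod (bergK x1 x2)"
  define A B where "A = cmod (bergK x1 x1)" and "B = cmod (bergK x2 x2)"
  define P where "P = Tz z x1 powr (3 * s) * Tz z x2 powr s"
  have "0 < u" "0 < v" "0 < C"
    using x1 x2 z by (auto simp: u_def v_def C_def add_pos_nonneg)
  have A: "A \<le> 1 / u\<^sup>2" and B: "B \<le> 1 / v\<^sup>2"
    using norm_bergK_le[OF x1 x1] norm_bergK_le[OF x2 x2]
    by (simp_all add: A_def B_def u_def v_def power2_eq_square)
  have k12: "cmod (bergK x1 x2) = k" "cmod (bergK x2 x1) = k"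
    by (simp_all add: k_def norm_bergK_commute)
  have k: "0 \<le> k" "k \<le> 1 / (u * v)"
    using norm_bergK_le[OF x1 x2] by (simp_all add: k12(1)[symmetric] u_def v_def)
  have P: "0 \<le> P" "P \<le> (C * u) powr (3 * s) * (C * v) powr s"
    using Tz_pos[OF z x1] Tz_pos[OF z x2] Tz_le_boundary_distance[OF z x1] Tz_le_boundary_distance[OF z x2] s
    by (auto simp: P_def C_def u_def v_def intro!: mult_mono powr_mono2)
  have "cmod (Jprime2_integrand s z (x1, x2)) \<le> P * (A * k + A * k) * (A * B + k * k)"
    using norm_triangle_ineq[of "bergK x1 x1 * bergK x1 x2" "bergK x1 x1 * bergK x2 x1"]
      norm_triangle_ineq4[of "bergK x1 x1 * bergK x2 x2" "bergK x1 x2 * bergK x2 x1"] P(1) k(1)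
    by (auto simp: Jprime2_integrand_def norm_mult A_def B_def k12 P_def[symmetric]
        intro!: mult_mono)
  also have "\<dots> \<le> ((C * u) powr (3 * s) * (C * v) powr s) * (1 / u\<^sup>2 * k + 1 / u\<^sup>2 * k) *
                   (1 / u\<^sup>2 * (1 / v\<^sup>2) + 1 / (u * v) * (1 / (u * v)))"
    using P A B k \<open>0 < u\<close> \<open>0 < v\<close>
    by (intro mult_mono add_mono mult_right_mono) (auto simp: A_def B_def)
  also have "\<dots> = 4 * C powr (4 * s) * (u powr (3 * s) / u ^ 4) * (v powr s / v\<^sup>2 * k)"
    using \<open>0 < u\<close> \<open>0 < v\<close> \<open>0 < C\<close>
    by (simp add: powr_mult powr_add[symmetric] field_simps power2_eq_square power4_eq_xxxx)
  also have "\<dots> = 4 * C powr (4 * s) * (u powr (3 * s - 4) * (v powr (s - 2) * k))"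
    using \<open>0 < u\<close> \<open>0 < v\<close> by (simp add: powr_diff powr_realpow)
  finally show ?thesis by (simp add: u_def v_def k_def weighted_norm_bergK_def mult_ac)
qed

lemma norm_integral_le_nn_integral:
  fixes f :: "'a \<Rightarrow> 'b::{banach, second_countable_topology}"
  assumes "(\<integral>\<^sup>+x. ennreal (norm (f x)) \<partial>M) \<le> ennreal B" "0 \<le> B"
  shows "norm (integral\<^sup>L M f) \<le> B"
proof (cases "integrable M f")
  case True
  then have "ennreal (norm (integral\<^sup>L M f)) \<le> ennreal B"
    using integral_norm_bound_ennreal assms(1) order_trans by blast
  then show ?thesis using assms(2) by simp
qed (simp add: not_integrable_integral_eq assms(2))

lemma ennreal_norm_indicator_Jprime2_integrand_le:
  fixes s N :: real and z :: complex and p :: "complex \<times> complex"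
  assumes s: "0 \<le> s" and z: "cmod z < 1"
  defines "C \<equiv> 2 * (1 + cmod z) / (1 - cmod z)"
  shows "ennreal (norm (indicator (hball N z \<times> hball N z) p *\<^sub>R Jprime2_integrand s z p))
    \<le> ennreal (4 * C powr (4 * s)) *
       (ennreal (weighted_norm_bergK (3 * s - 4) (s - 2) p) * indicator (ball 0 (1 - exp (- N) / C) \<times> ball 0 1) p)"
proof (cases "p \<in> hball N z \<times> hball N z")
  case True
  obtain x1 x2 where p: "p = (x1, x2)" by (cases p)
  have "0 < exp (- N) / C" using z by (simp add: C_def add_pos_nonneg)
  moreover have "x1 \<in> ball 0 (1 - exp (- N) / C)" "x2 \<in> ball 0 (1 - exp (- N) / C)"
    using True hball_subset_ball[OF z, of N] p by (auto simp: C_def)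
  ultimately have "cmod x1 < 1" "cmod x2 < 1" "p \<in> ball 0 (1 - exp (- N) / C) \<times> ball 0 1"
    using p by auto
  have "ennreal (norm (indicator (hball N z \<times> hball N z) p *\<^sub>R Jprime2_integrand s z p))
      \<le> ennreal (4 * C powr (4 * s) * weighted_norm_bergK (3 * s - 4) (s - 2) p)"
    using True norm_Jprime2_integrand_le[OF s z \<open>cmod x1 < 1\<close> \<open>cmod x2 < 1\<close>] p
    by (intro ennreal_leI) (simp add: C_def)
  also have "\<dots> = ennreal (4 * C powr (4 * s)) *
      (ennreal (weighted_norm_bergK (3 * s - 4) (s - 2) p) * indicator (ball 0 (1 - exp (- N) / C) \<times> ball 0 1) p)"
    using \<open>p \<in> ball 0 (1 - exp (- N) / C) \<times> ball 0 1\<close>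
    by (simp add: ennreal_mult weighted_norm_bergK_def case_prod_beta)
  finally show ?thesis .
qed simp

lemma norm_Jprime2_le:
  fixes s a N :: real and z :: complex
  assumes s: "1 < s" and z: "cmod z < 1" and a: "0 < a" "4 - 3 * s \<le> a" and N: "0 \<le> N"
  defines "C \<equiv> 2 * (1 + cmod z) / (1 - cmod z)"
  shows "cmod (Jprime2 s z N) \<le> 512 / ((s - 1) * a) * C powr (4 * s + a) * exp (a * N)"
proof -
  define \<delta> where "\<delta> = exp (- N) / C"
  define K where "K = 4 * C powr (4 * s)"
  define U where "U = hball N z"
  define I where "I = (32 * pi / (s - 1) * (2 * pi * \<delta> powr (- a) / a))"
  have "2 \<le> C" using z by (simp add: C_def field_simps)
  have \<delta>: "0 < \<delta>" "\<delta> \<le> 1"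
    using \<open>2 \<le> C\<close> N by (simp_all add: \<delta>_def divide_le_eq order_trans[of _ 1 C])
  have "(\<integral>\<^sup>+p. ennreal (norm (indicator (U \<times> U) p *\<^sub>R Jprime2_integrand s z p)) \<partial>lborel)
      \<le> (\<integral>\<^sup>+p. ennreal K * (ennreal (weighted_norm_bergK (3 * s - 4) (s - 2) p)
             * indicator (ball 0 (1 - \<delta>) \<times> ball 0 1) p) \<partial>lborel)"
    using ennreal_norm_indicator_Jprime2_integrand_le[of s z N] s z
    unfolding U_def K_def \<delta>_def C_def by (intro nn_integral_mono) simp
  also have "\<dots> = ennreal K * (\<integral>\<^sup>+p. ennreal (weighted_norm_bergK (3 * s - 4) (s - 2) p)
             * indicator (ball 0 (1 - \<delta>) \<times> ball 0 1) p \<partial>lborel)"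
    by (rule nn_integral_cmult) (simp add: lborel_prod[symmetric])
  also have "\<dots> \<le> ennreal K * ennreal I"
    unfolding I_def using nn_integral_weighted_norm_bergK_le[of "s - 2" a "3 * s - 4" \<delta>] s a \<delta>
    by (intro mult_left_mono) auto
  finally have "norm (set_lebesgue_integral lborel (U \<times> U) (Jprime2_integrand s z)) \<le> K * I"
    unfolding set_lebesgue_integral_def
    using s a by (intro norm_integral_le_nn_integral) (simp_all add: K_def I_def ennreal_mult[symmetric])
  then have "2 * (1 / pi\<^sup>2) * norm (set_lebesgue_integral lborel (U \<times> U) (Jprime2_integrand s z))
      \<le> 2 * (1 / pi\<^sup>2) * (K * I)"
    by (rule mult_left_mono) simp
  moreover have "cmod (Jprime2 s z N) = 2 * (1 / pi\<^sup>2) * norm (set_lebesgue_integral lborel (U \<times> U) (Jprime2_integrand s z))"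
    unfolding Jprime2_eq U_def norm_mult norm_of_real by simp
  moreover have "2 * (1 / pi\<^sup>2) * (K * I) = 512 / ((s - 1) * a) * C powr (4 * s + a) * exp (a * N)"
    using \<open>2 \<le> C\<close> s a
    by (simp add: K_def I_def \<delta>_def powr_divide powr_minus powr_mult exp_powr_real exp_minus powr_add
        field_simps power2_eq_square)
  ultimately show ?thesis by simp
qed

lemma eventually_mult_exp_le_exp:
  fixes a c K :: real
  assumes "a < c"
  shows "\<forall>\<^sub>F N in at_top. K * exp (a * N) \<le> exp (c * N)"
  using eventually_ge_at_top[of "ln (max 1 K) / (c - a)"]
proof eventually_elim
  case (elim N)
  then have "ln (max 1 K) \<le> (c - a) * N"
    using assms by (simp add: divide_le_eq mult.commute)
  then have "K \<le> exp ((c - a) * N)"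
    by (metis exp_ln exp_le_cancel_iff max.cobounded2 max.strict_coboundedI1 order_trans zero_less_one)
  then have "K * exp (a * N) \<le> exp ((c - a) * N) * exp (a * N)"
    by simp
  also have "\<dots> = exp (c * N)"
    by (simp add: exp_add[symmetric] algebra_simps)
  finally show ?case .
qed

theorem lemma3p2:
  fixes s :: real
  assumes "1 < s" and "s < 3/2"
  shows "\<exists>c>0. \<forall>z. cmod z < 1 \<longrightarrow>
           (\<forall>\<^sub>F N in at_top. cmod (Jprime2 s z N)
              \<le> c * (1 + cmod z)^4 / (1 - cmod z)^4 * exp ((3 - 2 * s) * N))"
proof (intro exI[of _ 1] conjI allI impI)
  fix z :: complex
  assume z: "cmod z < 1"
  define a where "a = (max 0 (4 - 3 * s) + (3 - 2 * s)) / 2"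
  have a: "0 < a" "4 - 3 * s \<le> a" "a < 3 - 2 * s"
    using assms by (auto simp: a_def max_def)
  define K where "K = 512 / ((s - 1) * a) * (2 * (1 + cmod z) / (1 - cmod z)) powr (4 * s + a)"
  have "1 \<le> (1 + cmod z)^4 / (1 - cmod z)^4"
    using z by (simp add: power_mono)
  show "\<forall>\<^sub>F N in at_top. cmod (Jprime2 s z N)
      \<le> 1 * (1 + cmod z)^4 / (1 - cmod z)^4 * exp ((3 - 2 * s) * N)"
    using eventually_ge_at_top[of 0] eventually_mult_exp_le_exp[OF a(3), of K]
  proof eventually_elim
    case (elim N)
    have "cmod (Jprime2 s z N) \<le> K * exp (a * N)"
      using norm_Jprime2_le[OF assms(1) z a(1,2) elim(1)] by (simp add: K_def)
    also have "\<dots> \<le> exp ((3 - 2 * s) * N)"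
      by (fact elim(2))
    also have "\<dots> \<le> 1 * (1 + cmod z)^4 / (1 - cmod z)^4 * exp ((3 - 2 * s) * N)"
      using mult_right_mono[OF \<open>1 \<le> (1 + cmod z)^4 / (1 - cmod z)^4\<close>, of "exp ((3 - 2 * s) * N)"]
      by simp
    finally show ?case .
  qed
qed simp

end
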